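(* Let $(X,\mathscr B,\mu,T)$ be a 1-step Markov shift and $\alpha$ its finite time-0 generating partition. Let $c_S^n=2^{-n}$ for all $S\subset n^*$. Then $$\operatorname{Asc}_\mu(X,\alpha,T)=\frac12\sum_{i=1}^\infty\frac1{2^i}H_\mu(\alpha\mid\alpha_i).$$
   Context: A 1-step Markov shift: $X=\mathcal A^{\mathbb Z}$ for a finite alphabet $\mathcal A$, $T$ the shift, $\mu$ the shift-invariant Markov measure determined by a stochastic matrix $P$ and a $P$-fixed probability vector $p$ ($\mu\{x_i=j_0,\dots,x_{i+k}=j_k\}=p_{j_0}P_{j_0j_1}\cdots P_{j_{k-1}j_k}$). The time-0 partition is $\alpha=\{\{x:x_0=a\}:a\in\mathcal A\}$; $\alpha_i=T^{-i}\alpha$, and for $S\subset n^*=\{0,\dots,n-1\}$, $\alpha_S=\bigvee_{i\in S}T^{-i}\alpha$. $H_\mu(\alpha\mid\beta)$ is conditional entropy. $\operatorname{Asc}_\mu(X,\alpha,T)=\lim_{n\to\infty}\frac1n\sum_{S\subset n^*}c_S^nH_\mu(\alpha_S)$. *)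

theory Defs
  imports "HOL-Analysis.Analysis"
begin

text \<open>1-step Markov shift on the alphabet given by a finite type 'a.
  P is the transition matrix, p the stationary vector.\<close>

definition stochastic_matrix :: "('a::finite \<Rightarrow> 'a \<Rightarrow> real) \<Rightarrow> bool" where
  "stochastic_matrix P \<longleftrightarrow> (\<forall>i j. 0 \<le> P i j) \<and> (\<forall>i. (\<Sum>j\<in>UNIV. P i j) = 1)"

definition stationary_prob :: "('a::finite \<Rightarrow> 'a \<Rightarrow> real) \<Rightarrow> ('a \<Rightarrow> real) \<Rightarrow> bool" where
  "stationary_prob P p \<longleftrightarrow> (\<forall>j. 0 \<le> p j) \<and> (\<Sum>j\<in>UNIV. p j) = 1
     \<and> (\<forall>j. (\<Sum>i\<in>UNIV. p i * P i j) = p j)"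

text \<open>Markov measure of the cylinder [x_0 = v 0, ..., x_{n-1} = v (n-1)]
  (by shift invariance this is also the measure of the cylinder at any position).\<close>
definition markov_word :: "('a \<Rightarrow> 'a \<Rightarrow> real) \<Rightarrow> ('a \<Rightarrow> real) \<Rightarrow> nat \<Rightarrow> (nat \<Rightarrow> 'a) \<Rightarrow> real" where
  "markov_word P p n v = (if n = 0 then 1 else p (v 0) * (\<Prod>k<n - 1. P (v k) (v (Suc k))))"

text \<open>Measure of the atom of alpha_S = \<Or>_{i\<in>S} T^{-i} alpha given by w : S \<rightarrow> 'a,
  i.e. mu {x. \<forall>i\<in>S. x_i = w i}, for a finite S \<subseteq> nat.\<close>
definition cyl_prob :: "('a::finite \<Rightarrow> 'a \<Rightarrow> real) \<Rightarrow> ('a \<Rightarrow> real) \<Rightarrow> nat set \<Rightarrow> (nat \<Rightarrow> 'a) \<Rightarrow> real" where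
  "cyl_prob P p S w =
     (let n = (if S = {} then 0 else Suc (Max S)) in
      \<Sum>v \<in> {v \<in> {0..<n} \<rightarrow>\<^sub>E (UNIV::'a set). \<forall>i\<in>S. v i = w i}. markov_word P p n v)"

text \<open>H_mu(alpha_S) (natural logarithm; 0 ln 0 = 0).\<close>
definition part_entropy :: "('a::finite \<Rightarrow> 'a \<Rightarrow> real) \<Rightarrow> ('a \<Rightarrow> real) \<Rightarrow> nat set \<Rightarrow> real" where
  "part_entropy P p S = - (\<Sum>w \<in> S \<rightarrow>\<^sub>E (UNIV::'a set). cyl_prob P p S w * ln (cyl_prob P p S w))"

definition cond_part_entropy :: "('a::finite \<Rightarrow> 'a \<Rightarrow> real) \<Rightarrow> ('a \<Rightarrow> real) \<Rightarrow> nat set \<Rightarrow> nat set \<Rightarrow> real" where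
  "cond_part_entropy P p S R = - (\<Sum>w \<in> (S \<union> R) \<rightarrow>\<^sub>E (UNIV::'a set).
       cyl_prob P p (S \<union> R) w * ln (cyl_prob P p (S \<union> R) w / cyl_prob P p R (restrict w R)))"

end

theory Submission
  imports Defs
begin

(* For t > m = Max S the Markov property factors the atom of alpha_(S + {t}) given by w as
   mu(atom of alpha_S given by w) * P^(t - m)(w m, w t), and under alpha_S the letter w m is
   distributed according to the stationary vector p. Hence adding t to S raises the entropy by
   exactly H(alpha | alpha_(t - m)). Splitting the subsets of {0..<n+1} by whether they contain n,
   the sums E n = sum_(S in Pow {0..<n}) H(alpha_S) satisfy
     E (n+1) = 2 E n + H(alpha) + sum_(j<n) 2^j H(alpha | alpha_(n - j)),
   so the increments of E n / 2^n converge to 1/2 sum_i 2^(-i) H(alpha | alpha_i), and by Cesaro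
   so does E n / (n 2^n). *)

lemma cesaro_mean_tendsto:
  fixes s :: "nat \<Rightarrow> real"
  assumes "s \<longlonglongrightarrow> L"
  shows "(\<lambda>n. (\<Sum>k<n. s k) / real n) \<longlonglongrightarrow> L"
proof (rule LIMSEQ_I)
  fix r :: real assume r: "0 < r"
  obtain N where N: "\<And>k. k \<ge> N \<Longrightarrow> \<bar>s k - L\<bar> < r / 2"
    using LIMSEQ_D[OF assms, of "r / 2"] r by auto
  define B where "B = (\<Sum>k<N. \<bar>s k - L\<bar>)"
  obtain M :: nat where M: "2 * B / r < real M" using reals_Archimedean2 by blast
  have "\<bar>(\<Sum>k<n. s k) / real n - L\<bar> < r" if n: "n \<ge> max (Suc N) M" for n
  proof -
    have npos: "0 < real n" using n by auto
    have "\<bar>\<Sum>k<n. s k - L\<bar> \<le> (\<Sum>k<n. \<bar>s k - L\<bar>)" by (rule sum_abs)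
    also have "\<dots> = B + (\<Sum>k\<in>{N..<n}. \<bar>s k - L\<bar>)"
      unfolding B_def using n by (simp add: sum.atLeastLessThan_concat[of 0 N n, symmetric] lessThan_atLeast0)
    also have "(\<Sum>k\<in>{N..<n}. \<bar>s k - L\<bar>) \<le> (\<Sum>k\<in>{N..<n}. r / 2)"
      by (rule sum_mono) (use N in \<open>force intro: less_imp_le\<close>)
    also have "\<dots> \<le> real n * (r / 2)" using r by simp
    finally have "\<bar>\<Sum>k<n. s k - L\<bar> \<le> B + real n * (r / 2)" by simp
    moreover have "B < real n * (r / 2)"
    proof -
      have "2 * B / r < real n" using M n by linarith
      then show ?thesis using r by (simp add: field_simps)
    qed
    ultimately have "\<bar>(\<Sum>k<n. s k) - real n * L\<bar> < real n * r"
      by (simp add: sum_subtractf)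
    then show ?thesis using npos by (simp add: field_simps abs_divide)
  qed
  then show "\<exists>n0. \<forall>n\<ge>n0. norm ((\<Sum>k<n. s k) / real n - L) < r"
    by (metis real_norm_def)
qed

lemma LIMSEQ_divide_real_of_increments:
  fixes f :: "nat \<Rightarrow> real"
  assumes "(\<lambda>n. f (Suc n) - f n) \<longlonglongrightarrow> L"
  shows "(\<lambda>n. f n / real n) \<longlonglongrightarrow> L"
proof -
  have "(\<lambda>n. (f n - f 0) / real n + f 0 / real n) \<longlonglongrightarrow> L + 0"
    using cesaro_mean_tendsto[OF assms]
    by (intro tendsto_add tendsto_divide_0[OF tendsto_const]
        filterlim_at_top_imp_at_infinity[OF filterlim_real_sequentially])
       (simp_all add: sum_lessThan_telescope)
  then show ?thesis by (simp add: diff_divide_distrib)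
qed

lemma sum_Pow_lessThan_Suc:
  "(\<Sum>S\<in>Pow {0..<Suc n}. f S) = (\<Sum>S\<in>Pow {0..<n}. f S) + (\<Sum>S\<in>Pow {0..<n}. f (insert n S))"
proof -
  have "inj_on (insert n) (Pow {0..<n})"
    by (rule inj_onI) (metis Pow_iff atLeastLessThan_iff insert_ident less_irrefl subsetD)
  moreover have "Pow {0..<n} \<inter> insert n ` Pow {0..<n} = {}" by auto
  ultimately show ?thesis
    unfolding atLeast0_lessThan_Suc Pow_insert by (simp add: sum.union_disjoint sum.reindex)
qed

lemma sum_Pow_Max:
  fixes f :: "nat \<Rightarrow> 'a::comm_semiring_1"
  shows "(\<Sum>S\<in>Pow {0..<n}. if S = {} then 0 else f (Max S)) = (\<Sum>j<n. 2 ^ j * f j)"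
proof (induction n)
  case (Suc n)
  have "Max (insert n S) = n" if "S \<in> Pow {0..<n}" for S
    using that by (intro Max_eqI) (auto intro: finite_subset)
  then show ?case by (simp add: sum_Pow_lessThan_Suc Suc.IH card_Pow of_nat_power)
qed simp

lemma sum_PiE_insert:
  fixes F :: "('i \<Rightarrow> 'a::finite) \<Rightarrow> 'b::comm_monoid_add"
  assumes "t \<notin> S"
  shows "(\<Sum>w\<in>insert t S \<rightarrow>\<^sub>E UNIV. F w) = (\<Sum>w\<in>S \<rightarrow>\<^sub>E UNIV. \<Sum>b\<in>UNIV. F (w(t := b)))"
proof -
  have "(\<Sum>w\<in>insert t S \<rightarrow>\<^sub>E UNIV. F w) = (\<Sum>(b, w)\<in>UNIV \<times> (S \<rightarrow>\<^sub>E UNIV). F (w(t := b)))"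
    unfolding PiE_insert_eq using inj_combinator[OF assms, of "\<lambda>_. UNIV"]
    by (subst sum.reindex) (auto simp: case_prod_unfold)
  also have "\<dots> = (\<Sum>w\<in>S \<rightarrow>\<^sub>E UNIV. \<Sum>b\<in>UNIV. F (w(t := b)))"
    by (simp add: sum.cartesian_product[symmetric] sum.swap[of _ UNIV])
  finally show ?thesis .
qed

definition xlnx :: "real \<Rightarrow> real" where "xlnx x = x * ln x"

lemma xlnx_mult: "0 \<le> x \<Longrightarrow> 0 \<le> y \<Longrightarrow> xlnx (x * y) = y * xlnx x + x * xlnx y"
  unfolding xlnx_def by (cases "x = 0 \<or> y = 0") (auto simp: ln_mult algebra_simps)

lemma xlnx_bounds:
  assumes "0 \<le> x" "x \<le> 1"
  shows "-1 \<le> xlnx x" "xlnx x \<le> 0"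
proof -
  show "xlnx x \<le> 0"
    using assms by (cases "x = 0") (auto simp: xlnx_def mult_nonneg_nonpos)
  show "-1 \<le> xlnx x"
  proof (cases "x = 0")
    case False
    then have "ln (1 / x) \<le> 1 / x - 1" using assms by (intro ln_le_minus_one) simp
    then have "x * - ln x \<le> x * (1 / x - 1)" using assms False by (intro mult_left_mono) (auto simp: ln_div)
    then show ?thesis using assms False by (simp add: xlnx_def algebra_simps)
  qed (simp add: xlnx_def)
qed

fun trans_pow :: "('a::finite \<Rightarrow> 'a \<Rightarrow> real) \<Rightarrow> nat \<Rightarrow> 'a \<Rightarrow> 'a \<Rightarrow> real" where
  "trans_pow P 0 a b = (if a = b then 1 else 0)"
| "trans_pow P (Suc k) a b = (\<Sum>c\<in>UNIV. trans_pow P k a c * P c b)"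

definition word_mass :: "('a::finite \<Rightarrow> 'a \<Rightarrow> real) \<Rightarrow> ('a \<Rightarrow> real) \<Rightarrow> nat \<Rightarrow> nat set \<Rightarrow> (nat \<Rightarrow> 'a) \<Rightarrow> real" where
  "word_mass P p N S w = (\<Sum>v\<in>{0..<N} \<rightarrow>\<^sub>E UNIV.
      if \<forall>i\<in>S. v i = w i then markov_word P p N v else 0)"

definition word_mass_ending ::
    "('a::finite \<Rightarrow> 'a \<Rightarrow> real) \<Rightarrow> ('a \<Rightarrow> real) \<Rightarrow> nat \<Rightarrow> nat set \<Rightarrow> (nat \<Rightarrow> 'a) \<Rightarrow> 'a \<Rightarrow> real" where
  "word_mass_ending P p N S w b = (\<Sum>v\<in>{0..<Suc N} \<rightarrow>\<^sub>E UNIV.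
      if (\<forall>i\<in>S. v i = w i) \<and> v N = b then markov_word P p (Suc N) v else 0)"

definition lag_entropy :: "('a::finite \<Rightarrow> 'a \<Rightarrow> real) \<Rightarrow> ('a \<Rightarrow> real) \<Rightarrow> nat \<Rightarrow> real" where
  "lag_entropy P p d = - (\<Sum>a\<in>UNIV. \<Sum>b\<in>UNIV. p a * xlnx (trans_pow P d a b))"

lemma cyl_prob_eq_word_mass:
  "cyl_prob P p S w = word_mass P p (if S = {} then 0 else Suc (Max S)) S w"
  unfolding cyl_prob_def word_mass_def Let_def by (subst sum.inter_filter) (auto intro!: finite_PiE)

lemma cyl_prob_cong: "(\<And>i. i \<in> S \<Longrightarrow> w i = w' i) \<Longrightarrow> cyl_prob P p S w = cyl_prob P p S w'"
  unfolding cyl_prob_def Let_def by (rule sum.cong) auto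

lemma markov_word_extend:
  "markov_word P p (Suc (Suc N)) (v(Suc N := c)) = markov_word P p (Suc N) v * P (v N) c"
  unfolding markov_word_def by (simp add: prod.lessThan_Suc mult.assoc)

lemma word_mass_ending_Suc:
  assumes "S \<subseteq> {0..<Suc N}"
  shows "word_mass_ending P p (Suc N) S w b = (\<Sum>a\<in>UNIV. word_mass_ending P p N S w a * P a b)"
proof -
  have agree_upd: "(\<forall>i\<in>S. (v(Suc N := c)) i = w i) \<longleftrightarrow> (\<forall>i\<in>S. v i = w i)" for v c
    using assms by auto
  have "word_mass_ending P p (Suc N) S w b = (\<Sum>v\<in>{0..<Suc N} \<rightarrow>\<^sub>E UNIV.
      if \<forall>i\<in>S. v i = w i then markov_word P p (Suc N) v * P (v N) b else 0)"
    unfolding word_mass_ending_def atLeast0_lessThan_Suc[of "Suc N"]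
    by (subst sum_PiE_insert, simp, simp only: agree_upd fun_upd_same markov_word_extend)
      (intro sum.cong refl, auto intro!: sum.neutral)
  also have "\<dots> = (\<Sum>v\<in>{0..<Suc N} \<rightarrow>\<^sub>E UNIV. \<Sum>a\<in>UNIV.
      (if (\<forall>i\<in>S. v i = w i) \<and> v N = a then markov_word P p (Suc N) v else 0) * P a b)"
    by (intro sum.cong refl) (auto simp: if_distrib[of "\<lambda>x. x * _"] intro!: sum.neutral cong: if_cong)
  also have "\<dots> = (\<Sum>a\<in>UNIV. word_mass_ending P p N S w a * P a b)"
    unfolding word_mass_ending_def sum_distrib_right by (rule sum.swap)
  finally show ?thesis .
qed

lemma word_mass_ending_add:
  assumes "S \<subseteq> {0..<Suc N}"
  shows "word_mass_ending P p (N + k) S w b = (\<Sum>a\<in>UNIV. word_mass_ending P p N S w a * trans_pow P k a b)"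
proof (induction k arbitrary: b)
  case 0
  then show ?case by (simp add: if_distrib cong: if_cong)
next
  case (Suc k)
  have "word_mass_ending P p (N + Suc k) S w b = (\<Sum>c\<in>UNIV. word_mass_ending P p (N + k) S w c * P c b)"
    using word_mass_ending_Suc[of S "N + k"] assms by force
  also have "\<dots> = (\<Sum>a\<in>UNIV. word_mass_ending P p N S w a * trans_pow P (Suc k) a b)"
    by (simp add: Suc.IH sum_distrib_left sum_distrib_right mult.assoc) (rule sum.swap)
  finally show ?case .
qed

lemma word_mass_ending_member:
  "N \<in> S \<Longrightarrow> word_mass_ending P p N S w b = (if b = w N then word_mass P p (Suc N) S w else 0)"
  unfolding word_mass_ending_def word_mass_def by (auto intro!: sum.neutral sum.cong)

lemma word_mass_insert: "word_mass P p (Suc N) (insert N S) w = word_mass_ending P p N S w (w N)"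
  unfolding word_mass_ending_def word_mass_def by (auto intro!: sum.cong)

lemma word_mass_ending_0_empty: "word_mass_ending P p 0 {} w b = p b"
  unfolding word_mass_ending_def markov_word_def
  by (simp add: atLeast0_lessThan_Suc sum_PiE_insert)

locale stationary_markov_chain =
  fixes P :: "'a::finite \<Rightarrow> 'a \<Rightarrow> real" and p :: "'a \<Rightarrow> real"
  assumes stochastic: "stochastic_matrix P" and stationary: "stationary_prob P p"
begin

lemma P_nonneg: "0 \<le> P a b"
  using stochastic unfolding stochastic_matrix_def by auto

lemma P_row_sum: "(\<Sum>b\<in>UNIV. P a b) = 1"
  using stochastic unfolding stochastic_matrix_def by auto

lemma p_nonneg: "0 \<le> p a"
  using stationary unfolding stationary_prob_def by auto

lemma p_sum: "(\<Sum>a\<in>UNIV. p a) = 1"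
  using stationary unfolding stationary_prob_def by auto

lemma trans_pow_nonneg: "0 \<le> trans_pow P k a b"
  by (induction k arbitrary: b) (auto intro!: sum_nonneg mult_nonneg_nonneg P_nonneg)

lemma trans_pow_row_sum: "(\<Sum>b\<in>UNIV. trans_pow P k a b) = 1"
proof (induction k)
  case (Suc k)
  have "(\<Sum>b\<in>UNIV. trans_pow P (Suc k) a b) = (\<Sum>c\<in>UNIV. trans_pow P k a c * (\<Sum>b\<in>UNIV. P c b))"
    by (simp add: sum_distrib_left) (rule sum.swap)
  then show ?case by (simp add: P_row_sum Suc.IH)
qed simp

lemma trans_pow_le_1: "trans_pow P k a b \<le> 1"
  using member_le_sum[of b UNIV "trans_pow P k a"] by (simp add: trans_pow_nonneg trans_pow_row_sum)

lemma stationary_trans_pow: "(\<Sum>a\<in>UNIV. p a * trans_pow P k a b) = p b"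
proof (induction k arbitrary: b)
  case (Suc k)
  have "(\<Sum>a\<in>UNIV. p a * trans_pow P (Suc k) a b) = (\<Sum>c\<in>UNIV. (\<Sum>a\<in>UNIV. p a * trans_pow P k a c) * P c b)"
    by (simp add: sum_distrib_left sum_distrib_right mult.assoc) (rule sum.swap)
  then show ?case using stationary by (simp add: Suc.IH stationary_prob_def)
qed (simp add: if_distrib cong: if_cong)

lemma cyl_prob_singleton: "cyl_prob P p {t} w = p (w t)"
  using word_mass_ending_add[of "{}" 0 P p t w "w t"]
  by (simp add: cyl_prob_eq_word_mass word_mass_insert word_mass_ending_0_empty stationary_trans_pow)

lemma cyl_prob_insert_Max:
  assumes "finite S" "S \<noteq> {}" "Max S < t"
  shows "cyl_prob P p (insert t S) w = cyl_prob P p S w * trans_pow P (t - Max S) (w (Max S)) (w t)"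
proof -
  let ?m = "Max S"
  have "Max (insert t S) = t"
    using assms by (intro Max_eqI) auto
  then have "cyl_prob P p (insert t S) w = word_mass_ending P p (?m + (t - ?m)) S w (w t)"
    using assms(3) by (simp add: cyl_prob_eq_word_mass word_mass_insert del: Max_less_iff)
  also have "\<dots> = (\<Sum>a\<in>UNIV. word_mass_ending P p ?m S w a * trans_pow P (t - ?m) a (w t))"
    using assms by (intro word_mass_ending_add) (auto simp: less_Suc_eq_le)
  also have "\<dots> = word_mass P p (Suc ?m) S w * trans_pow P (t - ?m) (w ?m) (w t)"
    using assms by (simp add: word_mass_ending_member if_distrib[of "\<lambda>x. x * _"] cong: if_cong)
  finally show ?thesis using assms by (simp add: cyl_prob_eq_word_mass)
qed

lemma cyl_prob_nonneg: "0 \<le> cyl_prob P p S w"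
  unfolding cyl_prob_def markov_word_def Let_def
  by (auto intro!: sum_nonneg mult_nonneg_nonneg prod_nonneg p_nonneg P_nonneg)

lemma cyl_prob_insert_Max_fun_upd:
  assumes "finite S" "S \<noteq> {}" "Max S < t"
  shows "cyl_prob P p (insert t S) (w(t := b)) = cyl_prob P p S w * trans_pow P (t - Max S) (w (Max S)) b"
proof -
  have "t \<notin> S" using assms by auto
  then have "cyl_prob P p S (w(t := b)) = cyl_prob P p S w"
    by (intro cyl_prob_cong) auto
  then show ?thesis
    using assms by (simp add: cyl_prob_insert_Max del: Max_less_iff)
qed

lemma sum_cyl_prob_Max:
  assumes "finite S" "S \<noteq> {}"
  shows "(\<Sum>w\<in>S \<rightarrow>\<^sub>E UNIV. cyl_prob P p S w * f (w (Max S))) = (\<Sum>a\<in>UNIV. p a * f a)"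
  using assms
proof (induction S arbitrary: f rule: finite_linorder_max_induct)
  case (insert t S)
  have t_notin: "t \<notin> S" and Max_t: "Max (insert t S) = t"
    using insert by (auto intro!: Max_eqI)
  show ?case
  proof (cases "S = {}")
    case True
    then show ?thesis by (simp add: sum_PiE_insert cyl_prob_singleton)
  next
    case False
    let ?T = "trans_pow P (t - Max S)"
    have "(\<Sum>w\<in>insert t S \<rightarrow>\<^sub>E UNIV. cyl_prob P p (insert t S) w * f (w (Max (insert t S))))
        = (\<Sum>w\<in>S \<rightarrow>\<^sub>E UNIV. cyl_prob P p S w * (\<Sum>b\<in>UNIV. ?T (w (Max S)) b * f b))"
      using insert False
      by (simp add: Max_t sum_PiE_insert[OF t_notin] cyl_prob_insert_Max_fun_upd sum_distrib_left mult.assoc)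
    also have "\<dots> = (\<Sum>a\<in>UNIV. p a * (\<Sum>b\<in>UNIV. ?T a b * f b))"
      using False by (rule insert.IH)
    also have "\<dots> = (\<Sum>b\<in>UNIV. (\<Sum>a\<in>UNIV. p a * ?T a b) * f b)"
      by (simp add: sum_distrib_left sum_distrib_right mult.assoc) (rule sum.swap)
    finally show ?thesis by (simp add: stationary_trans_pow)
  qed
qed simp

lemma part_entropy_xlnx: "part_entropy P p S = - (\<Sum>w\<in>S \<rightarrow>\<^sub>E UNIV. xlnx (cyl_prob P p S w))"
  unfolding part_entropy_def xlnx_def ..

lemma part_entropy_empty: "part_entropy P p {} = 0"
  unfolding part_entropy_def by (simp add: cyl_prob_def markov_word_def)

lemma part_entropy_singleton: "part_entropy P p {t} = - (\<Sum>a\<in>UNIV. xlnx (p a))"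
  unfolding part_entropy_xlnx by (simp add: sum_PiE_insert cyl_prob_singleton)

lemma part_entropy_insert_Max:
  assumes "finite S" "S \<noteq> {}" "Max S < t"
  shows "part_entropy P p (insert t S) = part_entropy P p S + lag_entropy P p (t - Max S)"
proof -
  let ?T = "trans_pow P (t - Max S)"
  have t_notin: "t \<notin> S" using assms by auto
  have row: "(\<Sum>b\<in>UNIV. xlnx (c * ?T a b)) = xlnx c + c * (\<Sum>b\<in>UNIV. xlnx (?T a b))" if "0 \<le> c" for a c
    using that by (simp add: xlnx_mult trans_pow_nonneg sum.distrib trans_pow_row_sum
        flip: sum_distrib_left sum_distrib_right)
  have "part_entropy P p (insert t S)
      = - (\<Sum>w\<in>S \<rightarrow>\<^sub>E UNIV. xlnx (cyl_prob P p S w) + cyl_prob P p S w * (\<Sum>b\<in>UNIV. xlnx (?T (w (Max S)) b)))"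
    using assms by (simp add: part_entropy_xlnx sum_PiE_insert[OF t_notin]
        cyl_prob_insert_Max_fun_upd row cyl_prob_nonneg del: Max_less_iff)
  also have "\<dots> = part_entropy P p S - (\<Sum>a\<in>UNIV. p a * (\<Sum>b\<in>UNIV. xlnx (?T a b)))"
    using sum_cyl_prob_Max[OF assms(1,2), of "\<lambda>a. \<Sum>b\<in>UNIV. xlnx (?T a b)"]
    by (simp add: part_entropy_xlnx sum.distrib)
  also have "\<dots> = part_entropy P p S + lag_entropy P p (t - Max S)"
    by (simp add: lag_entropy_def sum_distrib_left)
  finally show ?thesis .
qed

lemma cond_part_entropy_lag:
  assumes "0 < d"
  shows "cond_part_entropy P p {0} {d} = lag_entropy P p d"
proof -
  \<comment> \<open>Chain rule H(alpha | alpha_d) = H(alpha_{0,d}) - H(alpha_d), and H(alpha_d) = H(alpha) by stationarity.\<close>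
  define q where "q a b = p a * trans_pow P d a b" for a b
  let ?w = "\<lambda>a b. ((\<lambda>_. undefined) :: nat \<Rightarrow> 'a)(0 := a, d := b)"
  have d_notin: "d \<notin> {0}" using assms by simp
  have sum_pair: "(\<Sum>w\<in>{d, 0} \<rightarrow>\<^sub>E UNIV. F w) = (\<Sum>a\<in>UNIV. \<Sum>b\<in>UNIV. F (?w a b))" for F :: "_ \<Rightarrow> real"
    by (simp only: sum_PiE_insert[OF d_notin] sum_PiE_insert[of 0 "{}"] empty_iff not_False_eq_True
        PiE_empty_domain sum.empty sum.insert finite.emptyI add_0_right)
  have cyl_pair: "cyl_prob P p {d, 0} (?w a b) = q a b" for a b
    using cyl_prob_insert_Max_fun_upd[of "{0}" d] assms by (simp add: q_def cyl_prob_singleton)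
  have column: "(\<Sum>a\<in>UNIV. q a b) = p b" for b
    by (simp add: q_def stationary_trans_pow)
  have q_nonneg: "0 \<le> q a b" for a b
    by (simp add: q_def p_nonneg trans_pow_nonneg)
  have log_ratio: "q a b * ln (q a b / p b) = xlnx (q a b) - q a b * ln (p b)" for a b
  proof (cases "q a b = 0")
    case False
    then have "0 < q a b" using q_nonneg by (simp add: less_le)
    moreover have "q a b \<le> p b"
      using member_le_sum[of a UNIV "\<lambda>a. q a b"] q_nonneg by (simp add: column)
    ultimately show ?thesis
      by (simp add: xlnx_def ln_div algebra_simps)
  qed (simp add: xlnx_def)
  have "cond_part_entropy P p {0} {d} = - (\<Sum>a\<in>UNIV. \<Sum>b\<in>UNIV. q a b * ln (q a b / p b))"
    unfolding cond_part_entropy_def insert_is_Un[symmetric] insert_commute[of 0 d]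
    by (simp add: sum_pair cyl_pair cyl_prob_singleton)
  also have "\<dots> = - (\<Sum>a\<in>UNIV. \<Sum>b\<in>UNIV. xlnx (q a b)) + (\<Sum>b\<in>UNIV. p b * ln (p b))"
  proof -
    have "(\<Sum>a\<in>UNIV. \<Sum>b\<in>UNIV. q a b * ln (p b)) = (\<Sum>b\<in>UNIV. p b * ln (p b))"
      by (subst sum.swap) (simp add: column flip: sum_distrib_right)
    then show ?thesis by (simp add: log_ratio sum_subtractf)
  qed
  also have "- (\<Sum>a\<in>UNIV. \<Sum>b\<in>UNIV. xlnx (q a b)) = part_entropy P p {d, 0}"
    by (simp add: part_entropy_xlnx sum_pair cyl_pair)
  also have "\<dots> = part_entropy P p {0} + lag_entropy P p d"
    using part_entropy_insert_Max[of "{0}" d] assms by simp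
  finally show ?thesis by (simp add: part_entropy_singleton xlnx_def)
qed

lemma lag_entropy_bounds: "0 \<le> lag_entropy P p d" "lag_entropy P p d \<le> CARD('a)"
proof -
  have bounds: "- p a \<le> p a * xlnx (trans_pow P d a b) \<and> p a * xlnx (trans_pow P d a b) \<le> 0" for a b
    using xlnx_bounds[OF trans_pow_nonneg trans_pow_le_1] p_nonneg[of a]
    by (auto simp: mult_nonneg_nonpos intro: order_trans[OF _ mult_left_mono[of "-1"]])
  have "(\<Sum>a\<in>UNIV. \<Sum>b::'a\<in>UNIV. - p a) \<le> (\<Sum>a\<in>UNIV. \<Sum>b\<in>UNIV. p a * xlnx (trans_pow P d a b))"
    by (intro sum_mono) (use bounds in auto)
  moreover have "(\<Sum>a\<in>UNIV. \<Sum>b\<in>UNIV. p a * xlnx (trans_pow P d a b)) \<le> 0"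
    using bounds by (intro sum_nonpos) auto
  ultimately show "0 \<le> lag_entropy P p d" "lag_entropy P p d \<le> CARD('a)"
    by (simp_all add: lag_entropy_def sum_negf p_sum flip: sum_distrib_left)
qed

lemma sum_part_entropy_Pow_Suc:
  "(\<Sum>S\<in>Pow {0..<Suc n}. part_entropy P p S)
     = 2 * (\<Sum>S\<in>Pow {0..<n}. part_entropy P p S) + part_entropy P p {0} + (\<Sum>j<n. 2 ^ j * lag_entropy P p (n - j))"
proof -
  have "part_entropy P p (insert n S) = part_entropy P p S + (if S = {} then part_entropy P p {0} else 0)
      + (if S = {} then 0 else lag_entropy P p (n - Max S))" if "S \<subseteq> {0..<n}" for S
  proof (cases "S = {}")
    case False
    moreover have "finite S" using that finite_subset by blast
    moreover have "Max S < n" using that False \<open>finite S\<close> by auto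
    ultimately show ?thesis by (simp add: part_entropy_insert_Max del: Max_less_iff)
  qed (simp add: part_entropy_empty part_entropy_singleton)
  then show ?thesis
    by (simp add: sum_Pow_lessThan_Suc sum.distrib sum_Pow_Max[of "\<lambda>j. lag_entropy P p (n - j)" n])
qed

lemma normalized_sum_part_entropy_increment:
  "(\<Sum>S\<in>Pow {0..<Suc n}. part_entropy P p S) / 2 ^ Suc n - (\<Sum>S\<in>Pow {0..<n}. part_entropy P p S) / 2 ^ n
     = part_entropy P p {0} / 2 ^ Suc n + (1 / 2) * (\<Sum>i<n. lag_entropy P p (Suc i) / 2 ^ Suc i)"
proof -
  have "(\<Sum>j<n. 2 ^ j * lag_entropy P p (n - j)) = (\<Sum>i<n. 2 ^ (n - Suc i) * lag_entropy P p (Suc i))"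
    by (subst sum.nat_diff_reindex[symmetric]) (simp add: Suc_diff_Suc)
  also have "\<dots> = 2 ^ Suc n * ((1 / 2) * (\<Sum>i<n. lag_entropy P p (Suc i) / 2 ^ Suc i))"
    by (simp add: sum_distrib_left power_diff field_simps)
  finally show ?thesis
    by (simp add: sum_part_entropy_Pow_Suc add_divide_distrib)
qed

lemma summable_lag_entropy: "summable (\<lambda>i. lag_entropy P p (Suc i) / 2 ^ Suc i)"
proof (rule summable_comparison_test')
  show "summable (\<lambda>i. real CARD('a) * (1 / 2) ^ i)"
    by (intro summable_mult summable_geometric) simp
  have "lag_entropy P p (Suc i) / 2 ^ Suc i \<le> real CARD('a) / 2 ^ i" for i
    using lag_entropy_bounds[of "Suc i"] by (simp add: field_simps)
  then show "norm (lag_entropy P p (Suc i) / 2 ^ Suc i) \<le> real CARD('a) * (1 / 2) ^ i" for i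
    using lag_entropy_bounds[of "Suc i"] by (simp add: power_divide)
qed

end

theorem proposition5p10:
  fixes P :: "'a::finite \<Rightarrow> 'a \<Rightarrow> real" and p :: "'a \<Rightarrow> real"
  assumes "stochastic_matrix P" and "stationary_prob P p"
  shows "summable (\<lambda>i. (1 / 2 ^ Suc i) * cond_part_entropy P p {0} {Suc i})
    \<and> (\<lambda>n. (1 / real n) * (\<Sum>S\<in>Pow {0..<n}. (1 / 2 ^ n) * part_entropy P p S))
        \<longlonglongrightarrow> (1/2) * (\<Sum>i. (1 / 2 ^ Suc i) * cond_part_entropy P p {0} {Suc i})"
proof -
  interpret stationary_markov_chain P p using assms by unfold_locales
  define g where "g i = lag_entropy P p (Suc i) / 2 ^ Suc i" for i
  define E where "E n = (\<Sum>S\<in>Pow {0..<n}. part_entropy P p S) / 2 ^ n" for n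
  have terms: "(\<lambda>i. (1 / 2 ^ Suc i) * cond_part_entropy P p {0} {Suc i}) = g"
    by (rule ext) (simp add: g_def cond_part_entropy_lag)
  have "summable g" unfolding g_def by (rule summable_lag_entropy)
  have increment: "E (Suc n) - E n = part_entropy P p {0} / 2 ^ Suc n + (1 / 2) * (\<Sum>i<n. g i)" for n
    unfolding E_def g_def by (rule normalized_sum_part_entropy_increment)
  have "(\<lambda>n. E (Suc n) - E n) \<longlonglongrightarrow> 0 + (1 / 2) * suminf g"
    unfolding increment using \<open>summable g\<close>
    by (intro tendsto_add tendsto_mult_left summable_LIMSEQ LIMSEQ_Suc[OF LIMSEQ_divide_realpow_zero]) simp
  then have "(\<lambda>n. E n / real n) \<longlonglongrightarrow> (1 / 2) * suminf g"
    by (intro LIMSEQ_divide_real_of_increments) simp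
  moreover have "(\<lambda>n. (1 / real n) * (\<Sum>S\<in>Pow {0..<n}. (1 / 2 ^ n) * part_entropy P p S)) = (\<lambda>n. E n / real n)"
    by (rule ext) (simp add: E_def sum_divide_distrib)
  ultimately show ?thesis
    unfolding terms using \<open>summable g\<close> by simp
qed

end
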